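(* For every NBA $\mathcal A$, the relation $S(\subseteq^{\mathrm{bw\text{-}di}},\supseteq^{\mathrm{bw\text{-}di}})$ is good for saturation, i.e. $\mathcal L(\mathrm{Sat}(\mathcal A,S(\subseteq^{\mathrm{bw\text{-}di}},\supseteq^{\mathrm{bw\text{-}di}})))=\mathcal L(\mathcal A)$.
   Context: An NBA $\mathcal A=(\Sigma,Q,I,F,\delta)$, $\delta\subseteq Q\times\Sigma\times Q$, forward and backward complete; initial traces start in $I$, fair traces are infinite and visit $F$ infinitely often; the language is the set of infinite words with an initial fair trace. Backward direct trace inclusion: $p\subseteq^{\mathrm{bw\text{-}di}}q$ iff for every finite word $\sigma_0\cdots\sigma_{m-1}$ and every initial finite trace $p_0\xrightarrow{\sigma_0}\cdots\xrightarrow{\sigma_{m-1}}p_m=p$ there is an initial finite trace $q_0\xrightarrow{\sigma_0}\cdots\xrightarrow{\sigma_{m-1}}q_m=q$ with $p_i\in F\Rightarrow q_i\in F$ for $0\le i\le m$; $\supseteq^{\mathrm{bw\text{-}di}}$ is its inverse. Let $\Delta=Q\times\Sigma\times Q$; $S(R_b,R_f)=\{((p,\sigma,r),(p',\sigma,r'))\in\Delta\times\Delta:p\,R_b\,p',\ r\,R_f\,r'\}$. For reflexive $S\subseteq\Delta\times\Delta$, $\mathrm{Sat}(\mathcal A,S)=(\Sigma,Q,I,F,\{t'\in\Delta:\exists t\in\delta,(t',t)\in S\})$. Good for saturation means the language is unchanged. *)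

theory Defs
  imports Main
begin

record ('s, 'q) nba =
  alph  :: "'s set"
  states :: "'q set"
  init  :: "'q set"
  acc   :: "'q set"
  trans :: "('q \<times> 's \<times> 'q) set"

definition nba_wf :: "('s, 'q) nba \<Rightarrow> bool" where
  "nba_wf A \<longleftrightarrow> finite (alph A) \<and> finite (states A) \<and>
     init A \<subseteq> states A \<and> acc A \<subseteq> states A \<and>
     trans A \<subseteq> states A \<times> alph A \<times> states A"

definition fw_complete :: "('s, 'q) nba \<Rightarrow> bool" where
  "fw_complete A \<longleftrightarrow> (\<forall>p\<in>states A. \<forall>a\<in>alph A. \<exists>r. (p, a, r) \<in> trans A)"

definition bw_complete :: "('s, 'q) nba \<Rightarrow> bool" where
  "bw_complete A \<longleftrightarrow> (\<forall>r\<in>states A. \<forall>a\<in>alph A. \<exists>p. (p, a, r) \<in> trans A)"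

definition Delta :: "('s, 'q) nba \<Rightarrow> ('q \<times> 's \<times> 'q) set" where
  "Delta A = states A \<times> alph A \<times> states A"

definition lang :: "('s, 'q) nba \<Rightarrow> (nat \<Rightarrow> 's) set" where
  "lang A = {w. (\<forall>i. w i \<in> alph A) \<and>
     (\<exists>\<rho>. \<rho> 0 \<in> init A \<and> (\<forall>i. (\<rho> i, w i, \<rho> (Suc i)) \<in> trans A) \<and>
          (\<exists>\<^sub>\<infinity>i. \<rho> i \<in> acc A))}"

definition bw_di :: "('s, 'q) nba \<Rightarrow> ('q \<times> 'q) set" where
  "bw_di A = {(p, q). p \<in> states A \<and> q \<in> states A \<and>
     (\<forall>m (w :: nat \<Rightarrow> 's) \<rho>. (\<forall>i<m. w i \<in> alph A) \<and> \<rho> 0 \<in> init A \<and>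
        (\<forall>i<m. (\<rho> i, w i, \<rho> (Suc i)) \<in> trans A) \<and> \<rho> m = p \<longrightarrow>
        (\<exists>\<rho>'. \<rho>' 0 \<in> init A \<and> (\<forall>i<m. (\<rho>' i, w i, \<rho>' (Suc i)) \<in> trans A) \<and>
              \<rho>' m = q \<and> (\<forall>i\<le>m. \<rho> i \<in> acc A \<longrightarrow> \<rho>' i \<in> acc A)))}"

definition S_rel :: "('s, 'q) nba \<Rightarrow> ('q \<times> 'q) set \<Rightarrow> ('q \<times> 'q) set \<Rightarrow>
    (('q \<times> 's \<times> 'q) \<times> ('q \<times> 's \<times> 'q)) set" where
  "S_rel A Rb Rf = {((p, a, r), (p', a', r')). (p, a, r) \<in> Delta A \<and> (p', a', r') \<in> Delta A \<and>
      a = a' \<and> (p, p') \<in> Rb \<and> (r, r') \<in> Rf}"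

definition Sat :: "('s, 'q) nba \<Rightarrow> (('q \<times> 's \<times> 'q) \<times> ('q \<times> 's \<times> 'q)) set \<Rightarrow> ('s, 'q) nba" where
  "Sat A S = A\<lparr> trans := {t' \<in> Delta A. \<exists>t \<in> trans A. (t', t) \<in> S} \<rparr>"

end

theory Submission imports Defs "HOL-Library.Infinite_Set" begin

text \<open>
  Every original transition is related to itself, so saturation only adds words. Conversely, a
  saturated transition \<open>(p, a, r)\<close> is witnessed by an original one \<open>(p', a, r')\<close> where
  \<open>p\<close> is backward direct trace included in \<open>p'\<close> and \<open>r'\<close> in \<open>r\<close>. By induction on the length,
  every finite prefix of a saturated initial trace can therefore be replaced by an original
  initial trace over the same word, ending in the same state and accepting wherever the saturated
  one is: redirect the simulating trace to \<open>p'\<close>, take the original transition to \<open>r'\<close>, and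
  redirect again to \<open>r\<close>. Since there are finitely many states, Koenig's lemma glues these prefix
  simulations into one infinite fair trace of the original automaton.
\<close>

lemma koenig_extend_prefix:
  fixes P :: "nat \<Rightarrow> (nat \<Rightarrow> 'a) \<Rightarrow> bool"
  assumes "finite Q"
    and range: "\<And>m \<pi> i. P m \<pi> \<Longrightarrow> i \<le> m \<Longrightarrow> \<pi> i \<in> Q"
    and inf: "infinite {m. \<exists>\<pi>'. P m \<pi>' \<and> (\<forall>i<n. \<pi>' i = \<pi> i)}"
  shows "\<exists>q. infinite {m. \<exists>\<pi>'. P m \<pi>' \<and> (\<forall>i<Suc n. \<pi>' i = (\<pi>(n := q)) i)}"
proof -
  let ?M = "{m. \<exists>\<pi>'. P m \<pi>' \<and> (\<forall>i<n. \<pi>' i = \<pi> i)}"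
  let ?N = "\<lambda>q. {m. \<exists>\<pi>'. P m \<pi>' \<and> (\<forall>i<Suc n. \<pi>' i = (\<pi>(n := q)) i)}"
  have "?M \<subseteq> (?M \<inter> {n..}) \<union> {..<n}" by auto
  with inf have "infinite (?M \<inter> {n..})"
    using finite_subset by auto
  moreover have "?M \<inter> {n..} \<subseteq> (\<Union>q\<in>Q. ?N q)"
  proof
    fix m assume "m \<in> ?M \<inter> {n..}"
    then obtain \<pi>' where "P m \<pi>'" "\<forall>i<n. \<pi>' i = \<pi> i" "n \<le> m" by auto
    moreover from this have "\<pi>' n \<in> Q" using range by blast
    ultimately have "m \<in> ?N (\<pi>' n)" by (auto simp: less_Suc_eq)
    with \<open>\<pi>' n \<in> Q\<close> show "m \<in> (\<Union>q\<in>Q. ?N q)" by blast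
  qed
  ultimately have "infinite (\<Union>q\<in>Q. ?N q)"
    using finite_subset by blast
  then show ?thesis
    using \<open>finite Q\<close> by blast
qed

lemma koenig_lemma:
  fixes P :: "nat \<Rightarrow> (nat \<Rightarrow> 'a) \<Rightarrow> bool"
  assumes "finite Q"
    and down: "\<And>m \<pi>. P (Suc m) \<pi> \<Longrightarrow> P m \<pi>"
    and ex: "\<And>m. \<exists>\<pi>. P m \<pi>"
    and range: "\<And>m \<pi> i. P m \<pi> \<Longrightarrow> i \<le> m \<Longrightarrow> \<pi> i \<in> Q"
    and local: "\<And>m \<pi> \<pi>'. P m \<pi> \<Longrightarrow> (\<forall>i\<le>m. \<pi> i = \<pi>' i) \<Longrightarrow> P m \<pi>'"
  shows "\<exists>\<pi>. \<forall>m. P m \<pi>"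
proof -
  define extendable where
    "extendable n \<pi> \<longleftrightarrow> infinite {m. \<exists>\<pi>'. P m \<pi>' \<and> (\<forall>i<n. \<pi>' i = \<pi> i)}" for n \<pi>
  \<comment> \<open>\<open>f n\<close> fixes the first \<open>n\<close> values of the path so that infinitely many levels keep a
    witness through it; the path is the diagonal \<open>\<lambda>i. f (Suc i) i\<close>.\<close>
  define f where
    "f = rec_nat (\<lambda>_. undefined) (\<lambda>n \<pi>. \<pi>(n := SOME q. extendable (Suc n) (\<pi>(n := q))))"
  have f_Suc: "f (Suc n) = (f n)(n := SOME q. extendable (Suc n) ((f n)(n := q)))" for n
    unfolding f_def by simp
  have f_extendable: "extendable n (f n)" for n
  proof (induction n)
    case 0
    have "{m. \<exists>\<pi>'. P m \<pi>'} = UNIV" using ex by blast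
    then show ?case unfolding extendable_def by simp
  next
    case (Suc n)
    then obtain q where "extendable (Suc n) ((f n)(n := q))"
      using koenig_extend_prefix[of Q P n "f n"] \<open>finite Q\<close> range
      unfolding extendable_def by blast
    then show ?case unfolding f_Suc by (rule someI)
  qed
  have f_stable: "f (Suc n) i = f (Suc i) i" if "i \<le> n" for n i
    using that
  proof (induction n)
    case (Suc n)
    show ?case
    proof (cases "i = Suc n")
      case False
      then have "f (Suc (Suc n)) i = f (Suc n) i"
        unfolding f_Suc[of "Suc n"] by simp
      with Suc False show ?thesis by simp
    qed simp
  qed simp
  have "P n (\<lambda>i. f (Suc i) i)" for n
  proof -
    from f_extendable[of "Suc n"] obtain m where
      "n \<le> m" "m \<in> {m. \<exists>\<pi>'. P m \<pi>' \<and> (\<forall>i<Suc n. \<pi>' i = f (Suc n) i)}"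
      unfolding extendable_def infinite_nat_iff_unbounded_le by blast
    then obtain \<pi>' where "P m \<pi>'" "\<forall>i<Suc n. \<pi>' i = f (Suc n) i" by blast
    then have agree: "\<forall>i\<le>n. \<pi>' i = f (Suc i) i"
      using f_stable[of _ n] by (simp add: less_Suc_eq_le)
    from \<open>n \<le> m\<close> \<open>P m \<pi>'\<close> have "P n \<pi>'"
      by (induction n rule: inc_induct) (use down in auto)
    then show ?thesis using local[of n \<pi>' "\<lambda>i. f (Suc i) i"] agree by simp
  qed
  then show ?thesis by blast
qed

definition initial_trace :: "('s, 'q) nba \<Rightarrow> (nat \<Rightarrow> 's) \<Rightarrow> nat \<Rightarrow> (nat \<Rightarrow> 'q) \<Rightarrow> bool" where
  "initial_trace A w m \<rho> \<longleftrightarrow> \<rho> 0 \<in> init A \<and> (\<forall>i<m. (\<rho> i, w i, \<rho> (Suc i)) \<in> trans A)"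

lemma initial_trace_Suc:
  "initial_trace A w (Suc m) \<rho> \<longleftrightarrow> initial_trace A w m \<rho> \<and> (\<rho> m, w m, \<rho> (Suc m)) \<in> trans A"
  unfolding initial_trace_def by (auto simp: less_Suc_eq)

lemma initial_trace_cong:
  assumes "\<forall>i\<le>m. \<rho> i = \<rho>' i"
  shows "initial_trace A w m \<rho> \<longleftrightarrow> initial_trace A w m \<rho>'"
  using assms unfolding initial_trace_def by (metis Suc_leI less_imp_le_nat zero_le)

lemma initial_trace_states:
  assumes "nba_wf A" "initial_trace A w m \<rho>" "i \<le> m"
  shows "\<rho> i \<in> states A"
proof (cases i)
  case 0
  then show ?thesis using assms unfolding initial_trace_def nba_wf_def by blast
next
  case (Suc j)
  with assms have "(\<rho> j, w j, \<rho> i) \<in> trans A" unfolding initial_trace_def by auto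
  then show ?thesis using assms(1) unfolding nba_wf_def by blast
qed

lemma bw_di_refl: "p \<in> states A \<Longrightarrow> (p, p) \<in> bw_di A"
  unfolding bw_di_def by blast

lemma bw_diD:
  assumes "(p, q) \<in> bw_di A" "\<forall>i<m. w i \<in> alph A" "initial_trace A w m \<rho>" "\<rho> m = p"
  shows "\<exists>\<rho>'. initial_trace A w m \<rho>' \<and> \<rho>' m = q \<and> (\<forall>i\<le>m. \<rho> i \<in> acc A \<longrightarrow> \<rho>' i \<in> acc A)"
  using assms unfolding bw_di_def initial_trace_def by blast

lemma Sat_simps [simp]:
  "alph (Sat A S) = alph A" "states (Sat A S) = states A"
  "init (Sat A S) = init A" "acc (Sat A S) = acc A"
  "trans (Sat A S) = {t' \<in> Delta A. \<exists>t \<in> trans A. (t', t) \<in> S}"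
  unfolding Sat_def by simp_all

lemma trans_subset_Sat_bw_di:
  assumes "nba_wf A"
  shows "trans A \<subseteq> trans (Sat A (S_rel A (bw_di A) ((bw_di A)\<inverse>)))"
proof
  fix t assume "t \<in> trans A"
  moreover obtain p a r where "t = (p, a, r)" by (cases t)
  ultimately have "(p, a, r) \<in> trans A" "(p, a, r) \<in> Delta A"
    using assms unfolding nba_wf_def Delta_def by auto
  moreover have "(p, p) \<in> bw_di A" "(r, r) \<in> bw_di A"
    using \<open>(p, a, r) \<in> Delta A\<close> bw_di_refl unfolding Delta_def by auto
  ultimately show "t \<in> trans (Sat A (S_rel A (bw_di A) ((bw_di A)\<inverse>)))"
    unfolding \<open>t = (p, a, r)\<close> by (auto simp: S_rel_def)
qed

lemma Sat_bw_di_trace_simulation: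
  assumes "\<forall>i<m. w i \<in> alph A"
    and "initial_trace (Sat A (S_rel A (bw_di A) ((bw_di A)\<inverse>))) w m \<rho>"
  shows "\<exists>\<pi>. initial_trace A w m \<pi> \<and> \<pi> m = \<rho> m \<and> (\<forall>i\<le>m. \<rho> i \<in> acc A \<longrightarrow> \<pi> i \<in> acc A)"
  using assms
proof (induction m)
  case 0
  then show ?case unfolding initial_trace_def by auto
next
  case (Suc m)
  then obtain \<pi> where \<pi>: "initial_trace A w m \<pi>" "\<pi> m = \<rho> m"
    "\<forall>i\<le>m. \<rho> i \<in> acc A \<longrightarrow> \<pi> i \<in> acc A"
    by (auto simp: initial_trace_Suc)
  from Suc.prems(2) obtain p' r' where t: "(p', w m, r') \<in> trans A"
    and p': "(\<rho> m, p') \<in> bw_di A" and r': "(r', \<rho> (Suc m)) \<in> bw_di A"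
    unfolding initial_trace_Suc by (auto simp: S_rel_def)
  obtain \<pi>1 where \<pi>1: "initial_trace A w m \<pi>1" "\<pi>1 m = p'"
    "\<forall>i\<le>m. \<pi> i \<in> acc A \<longrightarrow> \<pi>1 i \<in> acc A"
    using bw_diD[OF p' _ \<pi>(1,2)] Suc.prems(1) by auto
  define \<pi>2 where "\<pi>2 = \<pi>1(Suc m := r')"
  have \<pi>2: "initial_trace A w (Suc m) \<pi>2" "\<pi>2 (Suc m) = r'" "\<forall>i\<le>m. \<pi>2 i = \<pi>1 i"
    using \<pi>1 t initial_trace_cong[of m \<pi>1 \<pi>2] unfolding \<pi>2_def initial_trace_Suc by auto
  obtain \<pi>3 where \<pi>3: "initial_trace A w (Suc m) \<pi>3" "\<pi>3 (Suc m) = \<rho> (Suc m)"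
    "\<forall>i\<le>Suc m. \<pi>2 i \<in> acc A \<longrightarrow> \<pi>3 i \<in> acc A"
    using bw_diD[OF r' Suc.prems(1) \<pi>2(1,2)] by blast
  have "\<forall>i\<le>Suc m. \<rho> i \<in> acc A \<longrightarrow> \<pi>3 i \<in> acc A"
    using \<pi>(2,3) \<pi>1 \<pi>2 \<pi>3(2,3) by (metis le_Suc_eq)
  with \<pi>3 show ?case by blast
qed

lemma lang_Sat_bw_di_subset:
  assumes "nba_wf A"
  shows "lang (Sat A (S_rel A (bw_di A) ((bw_di A)\<inverse>))) \<subseteq> lang A"
proof
  fix w assume "w \<in> lang (Sat A (S_rel A (bw_di A) ((bw_di A)\<inverse>)))"
  then obtain \<rho> where w: "\<forall>i. w i \<in> alph A"
    and \<rho>: "\<And>m. initial_trace (Sat A (S_rel A (bw_di A) ((bw_di A)\<inverse>))) w m \<rho>"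
    and fair: "\<exists>\<^sub>\<infinity>i. \<rho> i \<in> acc A"
    unfolding lang_def initial_trace_def by auto
  define P where
    "P m \<pi> \<longleftrightarrow> initial_trace A w m \<pi> \<and> (\<forall>i\<le>m. \<rho> i \<in> acc A \<longrightarrow> \<pi> i \<in> acc A)" for m \<pi>
  have "\<exists>\<pi>. \<forall>m. P m \<pi>"
  proof (rule koenig_lemma[of "states A"])
    show "finite (states A)" using assms unfolding nba_wf_def by blast
    show "P m \<pi>" if "P (Suc m) \<pi>" for m \<pi> using that unfolding P_def initial_trace_Suc by auto
    show "\<exists>\<pi>. P m \<pi>" for m using Sat_bw_di_trace_simulation[OF _ \<rho>] w unfolding P_def by blast
    show "\<pi> i \<in> states A" if "P m \<pi>" "i \<le> m" for m \<pi> i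
      using initial_trace_states[OF assms] that unfolding P_def by blast
    show "P m \<pi>'" if "P m \<pi>" "\<forall>i\<le>m. \<pi> i = \<pi>' i" for m \<pi> \<pi>'
      using that initial_trace_cong[of m \<pi> \<pi>'] unfolding P_def by auto
  qed
  then obtain \<pi> where \<pi>: "\<And>m. P m \<pi>" by blast
  have "\<pi> 0 \<in> init A" using \<pi>[of 0] unfolding P_def initial_trace_def by blast
  moreover have "(\<pi> i, w i, \<pi> (Suc i)) \<in> trans A" for i
    using \<pi>[of "Suc i"] unfolding P_def initial_trace_def by blast
  moreover have "\<exists>\<^sub>\<infinity>i. \<pi> i \<in> acc A"
    using fair by (rule frequently_elim1) (use \<pi> in \<open>auto simp: P_def\<close>)
  ultimately show "w \<in> lang A" unfolding lang_def using w by blast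
qed

lemma lang_mono_trans:
  assumes "alph B = alph A" "init B = init A" "acc B = acc A" "trans A \<subseteq> trans B"
  shows "lang A \<subseteq> lang B"
  using assms unfolding lang_def by fastforce

theorem theorem10p6:
  fixes A :: "('s, 'q) nba"
  assumes "nba_wf A" and "fw_complete A" and "bw_complete A"
  shows "lang (Sat A (S_rel A (bw_di A) ((bw_di A)\<inverse>))) = lang A"
proof
  show "lang (Sat A (S_rel A (bw_di A) ((bw_di A)\<inverse>))) \<subseteq> lang A"
    using lang_Sat_bw_di_subset[OF \<open>nba_wf A\<close>] .
  show "lang A \<subseteq> lang (Sat A (S_rel A (bw_di A) ((bw_di A)\<inverse>)))"
    by (rule lang_mono_trans[OF _ _ _ trans_subset_Sat_bw_di[OF \<open>nba_wf A\<close>]]) simp_all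
qed

end
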